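(* Let $\mathbb{K}$ be $\mathbb{R}$ or $\mathbb{C}$. Let $U$ be a $2$-dimensional $\mathbb{K}$-vector space equipped with a chosen area form (nonzero alternating bilinear form) $\omega$, and let $SL(U)$ be the group of linear automorphisms of $U$ preserving $\omega$, acting on $U\otimes V^*$ via its action on the first factor and hence on $\bigwedge^4(U\otimes V^* )$. Then for every finite-dimensional $\mathbb{K}$-vector space $V$ there is an isomorphism, natural in $V$, $$\mathcal{R}(V)\;\simeq\;\Big(\textstyle\bigwedge^4(U\otimes V^* )\Big)^{SL(U)},$$ where the right-hand side denotes the subspace of $SL(U)$-invariant elements.
   Context: For a finite-dimensional vector space $V$, $\mathcal{R}(V)\subset (V^* )^{\otimes 4}$ denotes the subspace of tetralinear forms $R$ on $V$ satisfying, for all $a,b,c,d\in V$: (1) $R(a,b,c,d)=-R(b,a,c,d)=-R(a,b,d,c)$, and (2) $R(a,b,c,d)+R(b,c,a,d)+R(c,a,b,d)=0$ (the algebraic symmetries of a Riemann curvature tensor). *)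

theory Defs
  imports Complex_Main
begin

(* Coordinates: V = K^n with basis e_0..e_{n-1}, dual basis e^0..e^{n-1};
   U = K^2 with basis u_0,u_1; U (x) V^* has basis u_a (x) e^i, indexed by pairs (a,i).
   A 4-tensor is stored as its array of coefficients, required to vanish outside
   the index set. *)

type_synonym 'k t4 = "nat \<Rightarrow> nat \<Rightarrow> nat \<Rightarrow> nat \<Rightarrow> 'k"
type_synonym 'k w4 = "nat \<times> nat \<Rightarrow> nat \<times> nat \<Rightarrow> nat \<times> nat \<Rightarrow> nat \<times> nat \<Rightarrow> 'k"

definition supp4 :: "'i set \<Rightarrow> ('i \<Rightarrow> 'i \<Rightarrow> 'i \<Rightarrow> 'i \<Rightarrow> 'k::zero) \<Rightarrow> bool" where
  "supp4 I T \<longleftrightarrow> (\<forall>a b c d. \<not> (a \<in> I \<and> b \<in> I \<and> c \<in> I \<and> d \<in> I) \<longrightarrow> T a b c d = 0)"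

definition curv_space :: "nat \<Rightarrow> ('k::field) t4 set" where
  "curv_space n = {R. supp4 {..<n} R \<and>
     (\<forall>a b c d. R a b c d = - R b a c d \<and> R a b c d = - R a b d c \<and>
                R a b c d + R b c a d + R c a b d = 0)}"

text \<open>Lambda^4 W realised as the alternating (totally antisymmetric) 4-tensors in W^(x)4.\<close>
definition alt4 :: "('i \<Rightarrow> 'i \<Rightarrow> 'i \<Rightarrow> 'i \<Rightarrow> 'k::ab_group_add) \<Rightarrow> bool" where
  "alt4 T \<longleftrightarrow> (\<forall>x y z w. T x y z w = - T y x z w \<and> T x y z w = - T x z y w \<and>
                          T x y z w = - T x y w z)"

definition area_form :: "'k::field \<Rightarrow> (nat \<Rightarrow> 'k) \<Rightarrow> (nat \<Rightarrow> 'k) \<Rightarrow> 'k" where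
  "area_form c u v = c * (u 0 * v 1 - u 1 * v 0)"

definition mat2_vec :: "(nat \<Rightarrow> nat \<Rightarrow> 'k::field) \<Rightarrow> (nat \<Rightarrow> 'k) \<Rightarrow> nat \<Rightarrow> 'k" where
  "mat2_vec g u = (\<lambda>a. \<Sum>b<2. g a b * u b)"

definition SL_area :: "'k::field \<Rightarrow> (nat \<Rightarrow> nat \<Rightarrow> 'k) set" where
  "SL_area c = {g. (\<forall>a b. \<not> (a < 2 \<and> b < 2) \<longrightarrow> g a b = 0) \<and>
                   g 0 0 * g 1 1 - g 0 1 * g 1 0 \<noteq> 0 \<and>
                   (\<forall>u v. area_form c (mat2_vec g u) (mat2_vec g v) = area_form c u v)}"

definition act4 :: "(nat \<Rightarrow> nat \<Rightarrow> 'k::field) \<Rightarrow> 'k w4 \<Rightarrow> 'k w4" where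
  "act4 g T = (\<lambda>(a1,i1) (a2,i2) (a3,i3) (a4,i4).
     \<Sum>b1<2. \<Sum>b2<2. \<Sum>b3<2. \<Sum>b4<2.
       g a1 b1 * g a2 b2 * g a3 b3 * g a4 b4 * T (b1,i1) (b2,i2) (b3,i3) (b4,i4))"

definition inv_space :: "'k::field \<Rightarrow> nat \<Rightarrow> 'k w4 set" where
  "inv_space c n = {T. supp4 ({..<2} \<times> {..<n}) T \<and> alt4 T \<and>
                       (\<forall>g\<in>SL_area c. act4 g T = T)}"

text \<open>A linear map f : K^n \<rightarrow> K^m, as an m x n matrix F (F j i = coefficient of e_j in f e_i).\<close>
definition lin_mat :: "nat \<Rightarrow> nat \<Rightarrow> (nat \<Rightarrow> nat \<Rightarrow> 'k::zero) \<Rightarrow> bool" where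
  "lin_mat n m F \<longleftrightarrow> (\<forall>j i. \<not> (j < m \<and> i < n) \<longrightarrow> F j i = 0)"

definition pull_t4 :: "nat \<Rightarrow> (nat \<Rightarrow> nat \<Rightarrow> 'k::field) \<Rightarrow> 'k t4 \<Rightarrow> 'k t4" where
  "pull_t4 m F R = (\<lambda>i1 i2 i3 i4. \<Sum>j1<m. \<Sum>j2<m. \<Sum>j3<m. \<Sum>j4<m.
      F j1 i1 * F j2 i2 * F j3 i3 * F j4 i4 * R j1 j2 j3 j4)"

text \<open>Induced map (U (x) (K^m)^*)^(x)4 \<rightarrow> (U (x) (K^n)^*)^(x)4 from id (x) f^T.\<close>
definition pull_w4 :: "nat \<Rightarrow> (nat \<Rightarrow> nat \<Rightarrow> 'k::field) \<Rightarrow> 'k w4 \<Rightarrow> 'k w4" where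
  "pull_w4 m F T = (\<lambda>(a1,i1) (a2,i2) (a3,i3) (a4,i4).
     \<Sum>j1<m. \<Sum>j2<m. \<Sum>j3<m. \<Sum>j4<m.
       F j1 i1 * F j2 i2 * F j3 i3 * F j4 i4 * T (a1,j1) (a2,j2) (a3,j3) (a4,j4))"

definition natural_curvature_iso :: "'k::field \<Rightarrow> bool" where
  "natural_curvature_iso c \<longleftrightarrow>
    (\<exists>\<phi> :: nat \<Rightarrow> 'k t4 \<Rightarrow> 'k w4.
      (\<forall>n. bij_betw (\<phi> n) (curv_space n) (inv_space c n) \<and>
           (\<forall>R\<in>curv_space n. \<forall>S\<in>curv_space n.
              \<phi> n (\<lambda>a b d e. R a b d e + S a b d e) = (\<lambda>x y z w. \<phi> n R x y z w + \<phi> n S x y z w)) \<and>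
           (\<forall>s. \<forall>R\<in>curv_space n.
              \<phi> n (\<lambda>a b d e. s * R a b d e) = (\<lambda>x y z w. s * \<phi> n R x y z w))) \<and>
      (\<forall>n m F. lin_mat n m F \<longrightarrow>
         (\<forall>R\<in>curv_space m. \<phi> n (pull_t4 m F R) = pull_w4 m F (\<phi> m R))))"

end

theory Submission
  imports Defs
begin

text \<open>
  The SL(U)-invariants in the fourth tensor power of U* are spanned by \<epsilon>13 \<epsilon>24 and
  \<epsilon>14 \<epsilon>23, where \<epsilon> is the area form. A curvature tensor R therefore gives the invariant
  tensor \<epsilon>13 \<epsilon>24 R(1,4,3,2) + \<epsilon>14 \<epsilon>23 R(1,3,2,4) on U \<otimes> V*, and the curvature
  symmetries (through pair symmetry, which needs 2 to be invertible) make it alternating.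
  Conversely, invariance under the diagonal torus kills every component of an invariant
  alternating tensor except those with two u0-slots and two u1-slots, so by alternation the
  tensor is determined by its (u0,u0,u1,u1)-component R; invariance under the shear
  u1 \<mapsto> u0 + u1 is then the first Bianchi identity for R. Both maps only involve the
  V-indices through R, hence are natural in V.
\<close>

context
  fixes R :: "'k::field t4" and n :: nat
  assumes R: "R \<in> curv_space n"
begin

lemma curv_space_antisym12: "R a b c d = - R b a c d"
  using R unfolding curv_space_def by blast

lemma curv_space_antisym34: "R a b c d = - R a b d c"
  using R unfolding curv_space_def by blast

lemma curv_space_bianchi: "R a b c d + R b c a d + R c a b d = 0"
  using R unfolding curv_space_def by blast

end

lemma curv_space_pair_sym:
  fixes R :: "'k::field_char_0 t4"
  assumes R: "R \<in> curv_space n"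
  shows "R a b c d = R c d a b"
proof -
  note a12 = curv_space_antisym12[OF R] and a34 = curv_space_antisym34[OF R]
    and bianchi = curv_space_bianchi[OF R]
  txt \<open>The first Bianchi identities with last entry d, a, b, c; their alternating sum
    is 2 (R a b c d - R c d a b).\<close>
  have B1: "R a b c d + R b c a d + R c a b d = 0"
    by (rule bianchi)
  have B2: "- R b c a d - R c d a b + R b d a c = 0"
    using bianchi[of b c d a]
    by (simp add: a34[of b c d a] a34[of c d b a] a12[of d b c a] a34[of b d c a])
  have B3: "R c d a b - R d a b c + R c a b d = 0"
    using bianchi[of c d a b] by (simp add: a34[of d a c b] a12[of a c d b] a34[of c a d b])
  have B4: "R d a b c - R a b c d + R b d a c = 0"
    using bianchi[of d a b c] by (simp add: a34[of a b d c])
  have "2 * (R a b c d - R c d a b) = 0"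
    using B1 B2 B3 B4 by algebra
  then show ?thesis by simp
qed

lemma curv_space_bianchi_last3:
  fixes R :: "'k::field_char_0 t4"
  assumes R: "R \<in> curv_space n"
  shows "R a b c d = R a c b d + R a d c b"
proof -
  note ps = curv_space_pair_sym[OF R] and a12 = curv_space_antisym12[OF R]
    and a34 = curv_space_antisym34[OF R]
  have "R c d b a + R d b c a + R b c d a = 0"
    by (rule curv_space_bianchi[OF R])
  then show ?thesis
    by (simp add: ps[of a b c d] ps[of a c b d] ps[of a d c b] a34[of c d b a] a34[of d b c a]
        a34[of b c d a] a12[of d b a c] a12[of c b a d] algebra_simps eq_neg_iff_add_eq_0)
qed

definition levi_civita :: "nat \<Rightarrow> nat \<Rightarrow> 'k::field" where
  "levi_civita a b = (if a = 0 \<and> b = 1 then 1 else if a = 1 \<and> b = 0 then -1 else 0)"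

lemma levi_civita_simps [simp]:
  "levi_civita 0 (Suc 0) = 1" "levi_civita (Suc 0) 0 = -1" "levi_civita a a = 0"
  by (auto simp: levi_civita_def)

lemma levi_civita_antisym: "levi_civita b a = - levi_civita a b"
  by (simp add: levi_civita_def)

lemma levi_civita_pluecker:
  "levi_civita a1 a2 * levi_civita a3 a4 =
     levi_civita a1 a3 * levi_civita a2 a4 - levi_civita a1 a4 * levi_civita a2 a3"
  by (simp add: levi_civita_def)

lemma levi_civita_eq_0: "\<not> (a < 2 \<and> b < 2 \<and> a + b = 1) \<Longrightarrow> levi_civita a b = 0"
  unfolding levi_civita_def by (cases a; cases b) auto

lemma w4_eqI:
  assumes "\<And>a1 i1 a2 i2 a3 i3 a4 i4.
    S (a1,i1) (a2,i2) (a3,i3) (a4,i4) = T (a1,i1) (a2,i2) (a3,i3) (a4,i4)"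
  shows "S = T"
  using assms by (intro ext) auto

definition curv_to_alt :: "'k::field t4 \<Rightarrow> 'k w4" where
  "curv_to_alt R = (\<lambda>(a1,i1) (a2,i2) (a3,i3) (a4,i4).
      levi_civita a1 a3 * levi_civita a2 a4 * R i1 i4 i3 i2
    + levi_civita a1 a4 * levi_civita a2 a3 * R i1 i3 i2 i4)"

definition alt_to_curv :: "'k::field w4 \<Rightarrow> 'k t4" where
  "alt_to_curv T = (\<lambda>i j k l. T (0,i) (0,j) (1,k) (1,l))"

lemma curv_to_alt_apply:
  "curv_to_alt R (a1,i1) (a2,i2) (a3,i3) (a4,i4) =
      levi_civita a1 a3 * levi_civita a2 a4 * R i1 i4 i3 i2
    + levi_civita a1 a4 * levi_civita a2 a3 * R i1 i3 i2 i4"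
  by (simp add: curv_to_alt_def)

lemma curv_to_alt_add:
  "curv_to_alt (\<lambda>a b c d. R a b c d + S a b c d) =
    (\<lambda>x y z w. curv_to_alt R x y z w + curv_to_alt S x y z w)"
  by (rule w4_eqI) (simp add: curv_to_alt_apply algebra_simps)

lemma curv_to_alt_scale:
  "curv_to_alt (\<lambda>a b c d. s * R a b c d) = (\<lambda>x y z w. s * curv_to_alt R x y z w)"
  by (rule w4_eqI) (simp add: curv_to_alt_apply algebra_simps)

lemma alt_to_curv_curv_to_alt:
  fixes R :: "'k::field_char_0 t4"
  assumes R: "R \<in> curv_space n"
  shows "alt_to_curv (curv_to_alt R) = R"
proof (intro ext)
  fix i j k l
  show "alt_to_curv (curv_to_alt R) i j k l = R i j k l"
    by (simp add: alt_to_curv_def curv_to_alt_apply curv_space_bianchi_last3[OF R, of i j k l])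
qed

lemma alt4_curv_to_alt:
  fixes R :: "'k::field_char_0 t4"
  assumes R: "R \<in> curv_space n"
  shows "alt4 (curv_to_alt R)"
  unfolding alt4_def
proof (intro allI)
  fix x y z w :: "nat \<times> nat"
  obtain a1 i1 a2 i2 a3 i3 a4 i4
    where xyzw: "x = (a1,i1)" "y = (a2,i2)" "z = (a3,i3)" "w = (a4,i4)"
    by (cases x, cases y, cases z, cases w)
  note ps = curv_space_pair_sym[OF R] and a12 = curv_space_antisym12[OF R]
    and a34 = curv_space_antisym34[OF R] and lc = levi_civita_antisym[where 'a='k]
  have "curv_to_alt R x y z w = - curv_to_alt R y x z w"
    using ps[of i1 i3 i2 i4] a34[of i2 i4 i1 i3] ps[of i1 i4 i3 i2] a12[of i3 i2 i1 i4]
    by (simp add: xyzw curv_to_alt_apply mult.commute)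
  moreover have "curv_to_alt R x y z w = - curv_to_alt R x y w z"
    by (simp add: xyzw curv_to_alt_apply a34[of i1 i3 i4 i2] a34[of i1 i4 i2 i3] lc[of a4 a1]
        lc[of a4 a2] lc[of a3 a1] lc[of a3 a2])
  moreover have "curv_to_alt R x y z w = - curv_to_alt R x z y w"
    by (simp add: xyzw curv_to_alt_apply curv_space_bianchi_last3[OF R, of i1 i2 i3 i4]
        levi_civita_pluecker[of a1 a2 a3 a4] lc[of a3 a2] a34[of i1 i4 i2 i3] a34[of i1 i3 i4 i2]
        algebra_simps)
  ultimately show "curv_to_alt R x y z w = - curv_to_alt R y x z w \<and>
      curv_to_alt R x y z w = - curv_to_alt R x z y w \<and>
      curv_to_alt R x y z w = - curv_to_alt R x y w z"
    by blast
qed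

lemma supp4_curv_to_alt:
  assumes R: "R \<in> curv_space n"
  shows "supp4 ({..<2} \<times> {..<n}) (curv_to_alt R)"
  unfolding supp4_def
proof (intro allI impI)
  fix x y z w :: "nat \<times> nat"
  assume outside: "\<not> (x \<in> {..<2} \<times> {..<n} \<and> y \<in> {..<2} \<times> {..<n} \<and>
    z \<in> {..<2} \<times> {..<n} \<and> w \<in> {..<2} \<times> {..<n})"
  obtain a1 i1 a2 i2 a3 i3 a4 i4
    where xyzw: "x = (a1,i1)" "y = (a2,i2)" "z = (a3,i3)" "w = (a4,i4)"
    by (cases x, cases y, cases z, cases w)
  have "supp4 {..<n} R"
    using R unfolding curv_space_def by blast
  then show "curv_to_alt R x y z w = 0"
    using outside unfolding supp4_def xyzw curv_to_alt_apply
    by (auto simp: levi_civita_eq_0)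
qed

text \<open>Two U-slots carry u0 and two carry u1: weight zero for the torus diag(t, 1/t).\<close>
definition weight_zero :: "'k::zero w4 \<Rightarrow> bool" where
  "weight_zero T \<longleftrightarrow> (\<forall>a1 i1 a2 i2 a3 i3 a4 i4.
     \<not> (a1 < 2 \<and> a2 < 2 \<and> a3 < 2 \<and> a4 < 2 \<and> a1 + a2 + a3 + a4 = 2) \<longrightarrow>
     T (a1,i1) (a2,i2) (a3,i3) (a4,i4) = 0)"

lemma weight_zero_curv_to_alt: "weight_zero (curv_to_alt R)"
  unfolding weight_zero_def
proof (intro allI impI)
  fix a1 i1 a2 i2 a3 i3 a4 i4 :: nat
  assume "\<not> (a1 < 2 \<and> a2 < 2 \<and> a3 < 2 \<and> a4 < 2 \<and> a1 + a2 + a3 + a4 = 2)"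
  then have "\<not> (a1 < 2 \<and> a3 < 2 \<and> a1 + a3 = 1) \<or> \<not> (a2 < 2 \<and> a4 < 2 \<and> a2 + a4 = 1)"
    and "\<not> (a1 < 2 \<and> a4 < 2 \<and> a1 + a4 = 1) \<or> \<not> (a2 < 2 \<and> a3 < 2 \<and> a2 + a3 = 1)"
    by linarith+
  then show "curv_to_alt R (a1,i1) (a2,i2) (a3,i3) (a4,i4) = 0"
    unfolding curv_to_alt_apply by (auto simp: levi_civita_eq_0)
qed

lemma sum_nested3_reverse:
  "(\<Sum>x\<in>A. \<Sum>y\<in>A. \<Sum>z\<in>A. h x y z) = (\<Sum>x\<in>A. \<Sum>y\<in>A. \<Sum>z\<in>A. h z y x)"
proof -
  have "(\<Sum>x\<in>A. \<Sum>y\<in>A. \<Sum>z\<in>A. h x y z) = (\<Sum>x\<in>A. \<Sum>z\<in>A. \<Sum>y\<in>A. h x y z)"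
    by (rule sum.cong[OF refl], rule sum.swap)
  also have "\<dots> = (\<Sum>z\<in>A. \<Sum>x\<in>A. \<Sum>y\<in>A. h x y z)"
    by (rule sum.swap)
  also have "\<dots> = (\<Sum>z\<in>A. \<Sum>y\<in>A. \<Sum>x\<in>A. h x y z)"
    by (rule sum.cong[OF refl], rule sum.swap)
  finally show ?thesis .
qed

lemma pull_t4_swap24:
  "pull_t4 m F R i1 i4 i3 i2 =
    (\<Sum>j1<m. \<Sum>j2<m. \<Sum>j3<m. \<Sum>j4<m. F j1 i1 * F j2 i2 * F j3 i3 * F j4 i4 * R j1 j4 j3 j2)"
  unfolding pull_t4_def by (rule sum.cong[OF refl], subst sum_nested3_reverse) (simp add: mult_ac)

lemma pull_t4_swap23:
  "pull_t4 m F R i1 i3 i2 i4 =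
    (\<Sum>j1<m. \<Sum>j2<m. \<Sum>j3<m. \<Sum>j4<m. F j1 i1 * F j2 i2 * F j3 i3 * F j4 i4 * R j1 j3 j2 j4)"
  unfolding pull_t4_def by (rule sum.cong[OF refl], subst sum.swap) (simp add: mult_ac)

lemma curv_to_alt_pull:
  fixes R :: "'k::field t4"
  shows "curv_to_alt (pull_t4 m F R) = pull_w4 m F (curv_to_alt R)"
proof (rule w4_eqI)
  fix a1 i1 a2 i2 a3 i3 a4 i4 :: nat
  define e1 :: 'k where "e1 = levi_civita a1 a3 * levi_civita a2 a4"
  define e2 :: 'k where "e2 = levi_civita a1 a4 * levi_civita a2 a3"
  have "pull_w4 m F (curv_to_alt R) (a1,i1) (a2,i2) (a3,i3) (a4,i4) =
     (\<Sum>j1<m. \<Sum>j2<m. \<Sum>j3<m. \<Sum>j4<m.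
       F j1 i1 * F j2 i2 * F j3 i3 * F j4 i4 * (e1 * R j1 j4 j3 j2 + e2 * R j1 j3 j2 j4))"
    by (simp add: pull_w4_def curv_to_alt_apply e1_def e2_def)
  also have "\<dots> =
      e1 * (\<Sum>j1<m. \<Sum>j2<m. \<Sum>j3<m. \<Sum>j4<m. F j1 i1 * F j2 i2 * F j3 i3 * F j4 i4 * R j1 j4 j3 j2)
    + e2 * (\<Sum>j1<m. \<Sum>j2<m. \<Sum>j3<m. \<Sum>j4<m. F j1 i1 * F j2 i2 * F j3 i3 * F j4 i4 * R j1 j3 j2 j4)"
    by (simp add: sum.distrib sum_distrib_left algebra_simps)
  also have "\<dots> = e1 * pull_t4 m F R i1 i4 i3 i2 + e2 * pull_t4 m F R i1 i3 i2 i4"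
    by (simp only: pull_t4_swap24[symmetric] pull_t4_swap23[symmetric])
  finally show "curv_to_alt (pull_t4 m F R) (a1,i1) (a2,i2) (a3,i3) (a4,i4) =
      pull_w4 m F (curv_to_alt R) (a1,i1) (a2,i2) (a3,i3) (a4,i4)"
    by (simp add: curv_to_alt_apply e1_def e2_def)
qed

lemma sum_lessThan_2: "(\<Sum>b<2. f b) = f 0 + f (Suc 0)"
  by (simp add: numeral_2_eq_2)

lemma area_form_mat2_vec:
  "area_form c (mat2_vec g u) (mat2_vec g v) = (g 0 0 * g 1 1 - g 0 1 * g 1 0) * area_form c u v"
  by (simp add: area_form_def mat2_vec_def sum_lessThan_2 algebra_simps)

lemma SL_areaI:
  assumes "\<And>a b. \<not> (a < 2 \<and> b < 2) \<Longrightarrow> g a b = 0" and "g 0 0 * g 1 1 - g 0 1 * g 1 0 = 1"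
  shows "g \<in> SL_area c"
  using assms unfolding SL_area_def area_form_mat2_vec by auto

lemma SL_area_det:
  fixes c :: "'k::field"
  assumes "c \<noteq> 0" and "g \<in> SL_area c"
  shows "g 0 0 * g 1 1 - g 0 1 * g 1 0 = 1"
proof -
  define u0 :: "nat \<Rightarrow> 'k" where "u0 = (\<lambda>a. if a = 0 then 1 else 0)"
  define u1 :: "nat \<Rightarrow> 'k" where "u1 = (\<lambda>a. if a = 1 then 1 else 0)"
  have "area_form c (mat2_vec g u0) (mat2_vec g u1) = area_form c u0 u1"
    using assms(2) unfolding SL_area_def by blast
  then have "(g 0 0 * g 1 1 - g 0 1 * g 1 0) * c = 1 * c"
    unfolding area_form_mat2_vec by (simp add: area_form_def u0_def u1_def)
  then show ?thesis
    using assms(1) by (metis mult_cancel_right)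
qed

lemma SL_area_levi_civita:
  fixes c :: "'k::field"
  assumes "c \<noteq> 0" and "g \<in> SL_area c"
  shows "g a 0 * g b 1 - g a 1 * g b 0 = levi_civita a b"
proof (cases "a < 2 \<and> b < 2")
  case True
  then have "a = 0 \<or> a = 1" "b = 0 \<or> b = 1" by auto
  then show ?thesis
    using SL_area_det[OF assms] by (auto simp: levi_civita_def algebra_simps)
next
  case False
  then show ?thesis
    using assms(2) by (auto simp: SL_area_def levi_civita_def)
qed

text \<open>g \<otimes> g \<otimes> g \<otimes> g maps \<epsilon> \<otimes> \<epsilon> to (g \<epsilon> g^T) \<otimes> (g \<epsilon> g^T).\<close>
lemma act4_curv_to_alt:
  "act4 g (curv_to_alt R) (a1,i1) (a2,i2) (a3,i3) (a4,i4) =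
      (g a1 0 * g a3 1 - g a1 1 * g a3 0) * (g a2 0 * g a4 1 - g a2 1 * g a4 0) * R i1 i4 i3 i2
    + (g a1 0 * g a4 1 - g a1 1 * g a4 0) * (g a2 0 * g a3 1 - g a2 1 * g a3 0) * R i1 i3 i2 i4"
  by (simp add: act4_def curv_to_alt_apply sum_lessThan_2 algebra_simps)

lemma curv_to_alt_SL_invariant:
  assumes "c \<noteq> 0" and "g \<in> SL_area c"
  shows "act4 g (curv_to_alt R) = curv_to_alt R"
  by (rule w4_eqI) (simp only: act4_curv_to_alt curv_to_alt_apply SL_area_levi_civita[OF assms])

lemma curv_to_alt_in_inv_space:
  fixes R :: "'k::field_char_0 t4"
  assumes "c \<noteq> 0" and "R \<in> curv_space n"
  shows "curv_to_alt R \<in> inv_space c n"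
  unfolding inv_space_def
  using supp4_curv_to_alt alt4_curv_to_alt curv_to_alt_SL_invariant assms by blast

text \<open>Oriented so that the simplifier sorts u0-slots before u1-slots, and terminates.\<close>
lemma alt4_sort_simps:
  assumes "alt4 T"
  shows "T (Suc 0,i) (0,j) z w = - T (0,j) (Suc 0,i) z w"
    and "T x (Suc 0,i) (0,j) w = - T x (0,j) (Suc 0,i) w"
    and "T x y (Suc 0,i) (0,j) = - T x y (0,j) (Suc 0,i)"
  using assms unfolding alt4_def by blast+

lemma weight_zero_eq_0:
  "weight_zero T \<Longrightarrow> \<not> (a1 < 2 \<and> a2 < 2 \<and> a3 < 2 \<and> a4 < 2 \<and> a1 + a2 + a3 + a4 = 2) \<Longrightarrow>
    T (a1,i1) (a2,i2) (a3,i3) (a4,i4) = 0"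
  unfolding weight_zero_def by blast

lemma alt4_weight_zero_eqI:
  assumes "alt4 S" "alt4 T" "weight_zero S" "weight_zero T" "alt_to_curv S = alt_to_curv T"
  shows "S = T"
proof (rule w4_eqI)
  fix a1 i1 a2 i2 a3 i3 a4 i4 :: nat
  have ST: "S (0,i) (0,j) (Suc 0,k) (Suc 0,l) = T (0,i) (0,j) (Suc 0,k) (Suc 0,l)" for i j k l
    using assms(5) unfolding alt_to_curv_def by (metis One_nat_def)
  show "S (a1,i1) (a2,i2) (a3,i3) (a4,i4) = T (a1,i1) (a2,i2) (a3,i3) (a4,i4)"
  proof (cases "a1 < 2 \<and> a2 < 2 \<and> a3 < 2 \<and> a4 < 2 \<and> a1 + a2 + a3 + a4 = 2")
    case True
    then have "a1 = 0 \<or> a1 = 1" "a2 = 0 \<or> a2 = 1" "a3 = 0 \<or> a3 = 1" "a4 = 0 \<or> a4 = 1"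
      by auto
    then show ?thesis
      using True
      by (elim disjE) (simp_all add: alt4_sort_simps[OF assms(1)] alt4_sort_simps[OF assms(2)] ST)
  next
    case False
    then show ?thesis
      by (simp add: weight_zero_eq_0 assms(3,4))
  qed
qed

definition torus2 :: "'k::field \<Rightarrow> nat \<Rightarrow> nat \<Rightarrow> 'k" where
  "torus2 t a b = (if a = 0 \<and> b = 0 then t else if a = 1 \<and> b = 1 then inverse t else 0)"

definition shear2 :: "nat \<Rightarrow> nat \<Rightarrow> 'k::field" where
  "shear2 a b = (if a \<le> b \<and> b < 2 then 1 else 0)"

lemma torus2_SL_area: "t \<noteq> 0 \<Longrightarrow> torus2 t \<in> SL_area c"
  by (rule SL_areaI) (auto simp: torus2_def)

lemma shear2_SL_area: "shear2 \<in> SL_area c"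
  by (rule SL_areaI) (auto simp: shear2_def)

lemma weight_zero_if_torus2_invariant:
  fixes T :: "'k::field_char_0 w4"
  assumes supp: "supp4 ({..<2} \<times> I) T" and inv: "act4 (torus2 2) T = T"
  shows "weight_zero T"
  unfolding weight_zero_def
proof (intro allI impI)
  fix a1 i1 a2 i2 a3 i3 a4 i4 :: nat
  assume unbalanced: "\<not> (a1 < 2 \<and> a2 < 2 \<and> a3 < 2 \<and> a4 < 2 \<and> a1 + a2 + a3 + a4 = 2)"
  show "T (a1,i1) (a2,i2) (a3,i3) (a4,i4) = 0"
  proof (cases "a1 < 2 \<and> a2 < 2 \<and> a3 < 2 \<and> a4 < 2")
    case True
    then have "a1 = 0 \<or> a1 = 1" "a2 = 0 \<or> a2 = 1" "a3 = 0 \<or> a3 = 1" "a4 = 0 \<or> a4 = 1"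
      by auto
    moreover have
      "act4 (torus2 2) T (a1,i1) (a2,i2) (a3,i3) (a4,i4) = T (a1,i1) (a2,i2) (a3,i3) (a4,i4)"
      by (simp add: inv)
    ultimately show ?thesis
      using unbalanced by (elim disjE) (simp_all add: act4_def torus2_def sum_lessThan_2)
  next
    case False
    then show ?thesis
      using supp unfolding supp4_def by auto
  qed
qed

lemma alt_to_curv_bianchi_if_shear2_invariant:
  fixes T :: "'k::field w4"
  assumes "alt4 T" and "weight_zero T" and "act4 shear2 T = T"
  shows "alt_to_curv T i j k l + alt_to_curv T j k i l + alt_to_curv T k i j l = 0"
proof -
  have "act4 shear2 T (0,i) (0,j) (0,k) (1,l) = T (0,i) (0,j) (0,k) (1,l)"
    by (simp add: assms(3))
  moreover have "T (0,k) (0,i) (1,j) (1,l) = - T (0,i) (0,k) (1,j) (1,l)"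
    using assms(1) unfolding alt4_def by blast
  ultimately show ?thesis
    by (simp add: act4_def shear2_def sum_lessThan_2 alt_to_curv_def weight_zero_eq_0[OF assms(2)]
        alt4_sort_simps[OF assms(1)] algebra_simps)
qed

lemma inv_space_weight_zero:
  fixes T :: "'k::field_char_0 w4"
  assumes "T \<in> inv_space c n"
  shows "weight_zero T"
  using assms torus2_SL_area[of "2::'k" c]
  by (intro weight_zero_if_torus2_invariant) (auto simp: inv_space_def)

lemma alt_to_curv_in_curv_space:
  fixes T :: "'k::field_char_0 w4"
  assumes T: "T \<in> inv_space c n"
  shows "alt_to_curv T \<in> curv_space n"
proof -
  have supp: "supp4 ({..<2} \<times> {..<n}) T" and alt: "alt4 T" and shear: "act4 shear2 T = T"
    using T shear2_SL_area unfolding inv_space_def by auto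
  have "supp4 {..<n} (alt_to_curv T)"
    using supp unfolding supp4_def alt_to_curv_def by auto
  moreover have "alt_to_curv T i j k l = - alt_to_curv T j i k l"
    and "alt_to_curv T i j k l = - alt_to_curv T i j l k" for i j k l
    using alt unfolding alt4_def alt_to_curv_def by blast+
  moreover have "alt_to_curv T i j k l + alt_to_curv T j k i l + alt_to_curv T k i j l = 0"
    for i j k l
    using alt_to_curv_bianchi_if_shear2_invariant[OF alt inv_space_weight_zero[OF T] shear] .
  ultimately show ?thesis
    unfolding curv_space_def by blast
qed

lemma curv_to_alt_alt_to_curv:
  fixes T :: "'k::field_char_0 w4"
  assumes T: "T \<in> inv_space c n"
  shows "curv_to_alt (alt_to_curv T) = T"
proof (rule alt4_weight_zero_eqI)
  show "alt4 (curv_to_alt (alt_to_curv T))"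
    using alt_to_curv_in_curv_space[OF T] by (rule alt4_curv_to_alt)
  show "alt4 T"
    using T unfolding inv_space_def by blast
  show "weight_zero T"
    using T by (rule inv_space_weight_zero)
  show "alt_to_curv (curv_to_alt (alt_to_curv T)) = alt_to_curv T"
    using alt_to_curv_in_curv_space[OF T] by (rule alt_to_curv_curv_to_alt)
qed (rule weight_zero_curv_to_alt)

lemma bij_betw_curv_to_alt:
  fixes c :: "'k::field_char_0"
  assumes "c \<noteq> 0"
  shows "bij_betw curv_to_alt (curv_space n) (inv_space c n)"
  by (rule bij_betw_byWitness[where f' = alt_to_curv])
    (auto simp: alt_to_curv_curv_to_alt curv_to_alt_alt_to_curv curv_to_alt_in_inv_space[OF assms]
      alt_to_curv_in_curv_space)

lemma natural_curvature_iso_field_char_0: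
  fixes c :: "'k::field_char_0"
  assumes "c \<noteq> 0"
  shows "natural_curvature_iso c"
  unfolding natural_curvature_iso_def
  by (intro exI[of _ "\<lambda>n. curv_to_alt"] conjI allI ballI impI bij_betw_curv_to_alt[OF assms]
      curv_to_alt_add curv_to_alt_scale curv_to_alt_pull)

theorem proposition1:
  shows "(\<forall>c::real. c \<noteq> 0 \<longrightarrow> natural_curvature_iso c) \<and>
         (\<forall>c::complex. c \<noteq> 0 \<longrightarrow> natural_curvature_iso c)"
  by (simp add: natural_curvature_iso_field_char_0)

end
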